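(* Let $B$ be the open unit disk, let $U=(u,v)\in C^1(\overline B;\mathbb R^2)$ be harmonic in $B$, and let $\Phi=U|_{\partial B}$. Let $\tilde u$ be a harmonic conjugate of $u$ and $f=u+i\tilde u$. If $\det DU>0$ on $\partial B$, then $\mathrm{WN}(f(\partial B))=\mathrm{WN}(\Phi(\partial B))$.
   Context: Points of $\mathbb R^2$ are identified with complex numbers, $z=re^{i\theta}$. For a closed curve parameterized by $\Phi\in C^1(\partial B;\mathbb R^2)$ with $\partial\Phi/\partial\theta\neq0$ for every $\theta\in[0,2\pi]$, its winding number is the integer $\mathrm{WN}=\frac1{2\pi}\int_{\partial B}\mathrm d\,\arg\left(\frac{\partial\Phi}{\partial\theta}\right)$; $\mathrm{WN}(f(\partial B))$ is defined analogously using $\theta\mapsto f(e^{i\theta})$. *)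

theory Defs
  imports "HOL-Complex_Analysis.Complex_Analysis"
begin

definition harmonic_on :: "complex set \<Rightarrow> (complex \<Rightarrow> real) \<Rightarrow> bool" where
  "harmonic_on S g \<longleftrightarrow> open S \<and>
     (\<exists>g' g''. (\<forall>z\<in>S. (g has_derivative blinfun_apply (g' z)) (at z)
                     \<and> (g' has_derivative blinfun_apply (g'' z)) (at z))
             \<and> continuous_on S g''
             \<and> (\<forall>z\<in>S. blinfun_apply (blinfun_apply (g'' z) 1) 1
                      + blinfun_apply (blinfun_apply (g'' z) \<i>) \<i> = 0))"

text \<open>Winding number of a closed curve parametrised by theta \<mapsto> c(e^{i theta}):
  (1/2pi) \<integral> d arg (\<partial>/\<partial>theta c(e^{i theta})), i.e. the winding number around 0
  of the (closed, continuous) tangent curve theta \<mapsto> \<partial>/\<partial>theta c(e^{i theta}), theta \<in> [0,2pi].\<close>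
definition WN :: "(complex \<Rightarrow> complex) \<Rightarrow> complex" where
  "WN c = winding_number
            (\<lambda>t. vector_derivative (\<lambda>\<theta>. c (cis \<theta>)) (at (2 * pi * t))) 0"

end

theory Submission
  imports Defs
begin

text \<open>
  Let u = Re U. Since Re f = u, the derivative f' = u_x - i u_y is determined by DU, so it extends
  continuously to the closed disk and f is C^1 up to the boundary. At z = e^{i\<theta>} the tangents of
  the two curves are therefore f'(z) i z and DU(z)(i z). These have the same real part, and when
  that real part vanishes the product of their imaginary parts equals det DU(z) > 0. Hence the
  segment between the two tangents never contains 0, the straight-line homotopy between the tangent
  loops avoids 0, and their winding numbers agree.
\<close>

lemma tendsto_shrink_towards_point:
  fixes h :: "'a::real_normed_vector \<Rightarrow> 'b::topological_space"
  assumes "continuous_on S h" "convex S" "c \<in> S" "x \<in> S"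
  shows "((\<lambda>s. h (x - s *\<^sub>R (x - c))) \<longlongrightarrow> h x) (at_right 0)"
proof -
  have "continuous (at x within S) h"
    using assms(1,4) continuous_on_eq_continuous_within by blast
  moreover have "\<forall>\<^sub>F s in at_right 0. x - s *\<^sub>R (x - c) \<in> S"
  proof -
    have "\<forall>\<^sub>F s in at_right (0::real). s \<in> {0<..<1}"
      by (rule eventually_at_right_real) simp
    then show ?thesis
    proof (rule eventually_mono)
      fix s :: real assume "s \<in> {0<..<1}"
      then have "(1 - s) *\<^sub>R x + s *\<^sub>R c \<in> S"
        using assms(2-4) by (intro convexD_alt) auto
      then show "x - s *\<^sub>R (x - c) \<in> S"
        by (simp add: algebra_simps)
    qed
  qed
  moreover have "((\<lambda>s. x - s *\<^sub>R (x - c)) \<longlongrightarrow> x) (at_right 0)"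
    by (auto intro!: tendsto_eq_intros)
  ultimately show ?thesis
    by (rule continuous_within_tendsto_compose)
qed

lemma eventually_shrink_in_ball:
  fixes x z c :: "'a::real_normed_vector"
  assumes "norm (x - z) < d"
  shows "\<forall>\<^sub>F s in at_right 0. norm (x - s *\<^sub>R (x - c) - z) < d"
proof -
  have "((\<lambda>s. s * norm (x - c)) \<longlongrightarrow> 0) (at_right 0)"
    by (auto intro!: tendsto_eq_intros)
  then have "\<forall>\<^sub>F s in at_right 0. s * norm (x - c) < d - norm (x - z)"
    by (rule order_tendstoD(2)) (use assms in linarith)
  moreover have "\<forall>\<^sub>F s in at_right (0::real). s > 0"
    by (rule eventually_at_right_real[of 0 1, THEN eventually_mono]) simp_all
  ultimately show ?thesis
  proof eventually_elim
    case (elim s)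
    have eq: "x - s *\<^sub>R (x - c) - z = (x - z) - s *\<^sub>R (x - c)"
      by (simp add: algebra_simps)
    have "norm (x - s *\<^sub>R (x - c) - z) \<le> norm (x - z) + s * norm (x - c)"
      unfolding eq using elim norm_triangle_ineq4[of "x - z" "s *\<^sub>R (x - c)"] by simp
    with elim show ?case
      by linarith
  qed
qed

lemma lipschitz_bound_from_interior:
  fixes h :: "'a::euclidean_space \<Rightarrow> 'b::real_normed_vector"
  assumes S: "convex S" "c \<in> interior S" and h: "continuous_on S h"
    and w: "w \<in> S" "norm (w - z) < d" and z: "z \<in> S" and "e \<ge> 0"
    and bound: "\<And>p q. p \<in> interior S \<Longrightarrow> q \<in> interior S \<Longrightarrow> norm (p - z) < d \<Longrightarrow> norm (q - z) < d
                  \<Longrightarrow> norm (h p - h q) \<le> e * norm (p - q)"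
  shows "norm (h w - h z) \<le> e * norm (w - z)"
proof -
  define p where "p s = w - s *\<^sub>R (w - c)" for s :: real
  define q where "q s = z - s *\<^sub>R (z - c)" for s :: real
  have "((\<lambda>s. h (p s) - h (q s)) \<longlongrightarrow> h w - h z) (at_right 0)"
    unfolding p_def q_def using interior_subset S
    by (intro tendsto_diff tendsto_shrink_towards_point[OF h] w z) auto
  moreover have "\<forall>\<^sub>F s in at_right 0. norm (h (p s) - h (q s)) \<le> e * norm (w - z)"
  proof -
    have "d > 0"
      using w(2) by (metis norm_ge_zero le_less_trans)
    then have "\<forall>\<^sub>F s in at_right 0. s \<in> {0<..<1} \<and> norm (p s - z) < d \<and> norm (q s - z) < d"
      unfolding p_def q_def using w(2)
      by (intro eventually_conj eventually_at_right_real eventually_shrink_in_ball) simp_all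
    then show ?thesis
    proof (rule eventually_mono)
      fix s :: real assume s: "s \<in> {0<..<1} \<and> norm (p s - z) < d \<and> norm (q s - z) < d"
      have "p s \<in> interior S" "q s \<in> interior S"
        unfolding p_def q_def using s S w z interior_subset
        by (auto intro!: mem_interior_convex_shrink)
      then have "norm (h (p s) - h (q s)) \<le> e * norm (p s - q s)"
        using s by (intro bound) simp_all
      also have "p s - q s = (1 - s) *\<^sub>R (w - z)"
        unfolding p_def q_def by (simp add: algebra_simps)
      also have "e * norm \<dots> \<le> e * norm (w - z)"
        using s \<open>e \<ge> 0\<close> by (simp add: mult_left_le_one_le mult_left_mono)
      finally show "norm (h (p s) - h (q s)) \<le> e * norm (w - z)" .
    qed
  qed
  ultimately show ?thesis
    by (rule tendsto_upperbound[OF tendsto_norm]) (auto simp: trivial_limit_at_right_real)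
qed

text \<open>The mean value estimate for f w - g z * w on the interior near z extends to all of S.\<close>
lemma has_field_derivative_convex_from_interior:
  fixes f g :: "complex \<Rightarrow> complex"
  assumes S: "convex S" "c \<in> interior S"
    and f': "\<And>w. w \<in> interior S \<Longrightarrow> (f has_field_derivative g w) (at w)"
    and cont: "continuous_on S f" "continuous_on S g"
    and z: "z \<in> S"
  shows "(f has_field_derivative g z) (at z within S)"
  unfolding has_field_derivative_def has_derivative_within_alt
proof (intro conjI allI impI)
  show "bounded_linear ((*) (g z))"
    by (rule bounded_linear_mult_right)
  fix e :: real assume "e > 0"
  with cont(2) z obtain d where "d > 0"
    and d: "\<And>w. w \<in> S \<Longrightarrow> dist w z < d \<Longrightarrow> dist (g w) (g z) < e"
    unfolding continuous_on_iff by (metis dist_commute)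
  define h where "h w = f w - g z * w" for w
  have h_bound: "norm (h p - h q) \<le> e * norm (p - q)"
    if "p \<in> interior S" "q \<in> interior S" "norm (p - z) < d" "norm (q - z) < d" for p q
  proof (rule field_differentiable_bound)
    let ?T = "interior S \<inter> ball z d"
    show "convex ?T"
      using S(1) by (intro convex_Int convex_interior convex_ball)
    fix w assume w: "w \<in> ?T"
    then have "(f has_field_derivative g w) (at w within ?T)"
      using f' by (blast intro: has_field_derivative_at_within)
    then show "(h has_field_derivative g w - g z) (at w within ?T)"
      unfolding h_def by (auto intro!: derivative_eq_intros)
    have "w \<in> S" "dist w z < d"
      using w interior_subset by (auto simp: dist_commute)
    then show "norm (g w - g z) \<le> e"
      using d[of w] by (simp add: dist_norm)
  qed (use that in \<open>auto simp: dist_norm norm_minus_commute\<close>)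
  have h_cont: "continuous_on S h"
    unfolding h_def by (intro continuous_intros cont(1))
  have "norm (h w - h z) \<le> e * norm (w - z)" if "w \<in> S" "norm (w - z) < d" for w
    using \<open>e > 0\<close> by (intro lipschitz_bound_from_interior[OF S h_cont that z _ h_bound]) simp_all
  moreover have "h w - h z = f w - f z - g z * (w - z)" for w
    unfolding h_def by (simp add: algebra_simps)
  ultimately show "\<exists>d>0. \<forall>w\<in>S. norm (w - z) < d \<longrightarrow> norm (f w - f z - g z * (w - z)) \<le> e * norm (w - z)"
    using \<open>d > 0\<close> by metis
qed

text \<open>Re_multiplier L is u_x - i u_y for the real part u of a map with differential L: the unique c
  with Re (c h) = Re (L h), and the derivative of any holomorphic function with real part u.\<close>
definition Re_multiplier :: "(complex \<Rightarrow>\<^sub>L complex) \<Rightarrow> complex" where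
  "Re_multiplier L = complex_of_real (Re (L 1)) - \<i> * complex_of_real (Re (L \<i>))"

lemma blinfun_apply_complex_decompose:
  fixes L :: "complex \<Rightarrow>\<^sub>L 'a::real_normed_vector"
  shows "L h = Re h *\<^sub>R L 1 + Im h *\<^sub>R L \<i>"
proof -
  have "h = Re h *\<^sub>R 1 + Im h *\<^sub>R \<i>"
    by (simp add: complex_eq_iff)
  then have "L h = L (Re h *\<^sub>R 1 + Im h *\<^sub>R \<i>)"
    by (rule arg_cong)
  then show ?thesis
    by (simp only: blinfun.add_right blinfun.scaleR_right)
qed

lemma Re_Re_multiplier_mult: "Re (Re_multiplier L * h) = Re (L h)"
proof -
  have "Re (L h) = Re h * Re (L 1) + Im h * Re (L \<i>)"
    by (subst blinfun_apply_complex_decompose) simp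
  then show ?thesis
    by (simp add: Re_multiplier_def mult.commute)
qed

lemma eq_Re_multiplier:
  fixes L :: "complex \<Rightarrow>\<^sub>L complex"
  assumes "\<And>h. Re (c * h) = Re (L h)"
  shows "c = Re_multiplier L"
  using assms[of 1] assms[of \<i>] by (simp add: Re_multiplier_def complex_eq_iff)

lemma continuous_on_Re_multiplier:
  fixes L :: "'a::topological_space \<Rightarrow> complex \<Rightarrow>\<^sub>L complex"
  assumes "continuous_on S L"
  shows "continuous_on S (\<lambda>z. Re_multiplier (L z))"
  unfolding Re_multiplier_def by (intro continuous_intros assms)

lemma deriv_eq_Re_multiplier:
  fixes L :: "complex \<Rightarrow>\<^sub>L complex"
  assumes "f holomorphic_on S" "open S" "z \<in> S"
    and "\<And>w. w \<in> S \<Longrightarrow> Re (f w) = Re (U w)"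
    and "(U has_derivative blinfun_apply L) (at z)"
  shows "deriv f z = Re_multiplier L"
proof (rule eq_Re_multiplier)
  have "(f has_field_derivative deriv f z) (at z)"
    using holomorphic_derivI assms(1-3) .
  then have "((\<lambda>w. Re (f w)) has_derivative (\<lambda>h. Re (deriv f z * h))) (at z)"
    unfolding has_field_derivative_def by (intro derivative_intros)
  moreover have "((\<lambda>w. Re (U w)) has_derivative (\<lambda>h. Re (L h))) (at z)"
    using assms(5) by (intro derivative_intros)
  then have "((\<lambda>w. Re (f w)) has_derivative (\<lambda>h. Re (L h))) (at z)"
    by (rule has_derivative_transform_within_open[OF _ assms(2,3)]) (use assms(4) in auto)
  ultimately have "(\<lambda>h. Re (deriv f z * h)) = (\<lambda>h. Re (L h))"
    by (rule has_derivative_unique)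
  then show "Re (deriv f z * h) = Re (L h)" for h
    by (rule fun_cong)
qed

lemma has_field_derivative_Re_multiplier:
  fixes f U :: "complex \<Rightarrow> complex" and DU :: "complex \<Rightarrow> complex \<Rightarrow>\<^sub>L complex"
  assumes S: "convex S" "c \<in> interior S"
    and U': "\<And>z. z \<in> S \<Longrightarrow> (U has_derivative DU z) (at z within S)"
    and DU_cont: "continuous_on S DU"
    and f_hol: "f holomorphic_on interior S"
    and f_Re: "\<And>z. z \<in> interior S \<Longrightarrow> Re (f z) = Re (U z)"
    and f_cont: "continuous_on S f"
    and z: "z \<in> S"
  shows "(f has_field_derivative Re_multiplier (DU z)) (at z within S)"
proof (rule has_field_derivative_convex_from_interior[OF S _ f_cont continuous_on_Re_multiplier[OF DU_cont] z])
  fix w assume w: "w \<in> interior S"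
  have "at w within S = at w"
    using w by (rule at_within_interior)
  then have "(U has_derivative DU w) (at w)"
    using U'[of w] w interior_subset by auto
  with f_Re have "deriv f w = Re_multiplier (DU w)"
    by (intro deriv_eq_Re_multiplier[OF f_hol open_interior w])
  then show "(f has_field_derivative Re_multiplier (DU w)) (at w)"
    using holomorphic_derivI[OF f_hol open_interior w] by simp
qed

lemma convex_combination_same_sign_nonzero:
  fixes a b u :: real
  assumes ab: "a * b > 0" and u: "0 \<le> u" "u \<le> 1"
  shows "(1 - u) * a + u * b \<noteq> 0"
proof
  assume 0: "(1 - u) * a + u * b = 0"
  have "(1 - u) * a\<^sup>2 + u * (a * b) = ((1 - u) * a + u * b) * a"
    by (simp add: algebra_simps power2_eq_square)
  then have "(1 - u) * a\<^sup>2 + u * (a * b) = 0"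
    by (simp only: 0 mult_zero_left)
  moreover have "(1 - u) * a\<^sup>2 \<ge> 0" "u * (a * b) \<ge> 0"
    using ab u by simp_all
  ultimately have "u * (a * b) = 0" "(1 - u) * a\<^sup>2 = 0"
    by linarith+
  then show False
    using ab by auto
qed

text \<open>Both endpoints have real part Re (L \<tau>); when that vanishes, the product of their
  imaginary parts is det L * |\<tau>|^2, so they lie strictly on the same side of 0.\<close>
lemma zero_notin_segment_Re_multiplier:
  fixes L :: "complex \<Rightarrow>\<^sub>L complex"
  assumes det: "Re (L 1) * Im (L \<i>) - Im (L 1) * Re (L \<i>) > 0" and "\<tau> \<noteq> 0"
  shows "0 \<notin> closed_segment (Re_multiplier L * \<tau>) (L \<tau>)"
proof
  define A where "A = Re_multiplier L * \<tau>"
  assume "0 \<in> closed_segment A (L \<tau>)"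
  then obtain u where u: "0 \<le> u" "u \<le> 1" and 0: "(1 - u) *\<^sub>R A + u *\<^sub>R L \<tau> = 0"
    unfolding in_segment by auto
  have Re_eq: "Re A = Re (L \<tau>)"
    unfolding A_def by (rule Re_Re_multiplier_mult)
  have "(1 - u) * Re A + u * Re (L \<tau>) = 0"
    using arg_cong[OF 0, of Re] by simp
  then have Re0: "Re (L \<tau>) = 0"
    unfolding Re_eq by (simp add: algebra_simps)
  note L\<tau> = blinfun_apply_complex_decompose[of L \<tau>]
  have "Im A * Im (L \<tau>)
      = (Re (L 1) * Im (L \<i>) - Im (L 1) * Re (L \<i>)) * (Re \<tau>^2 + Im \<tau>^2)
        - Re (L \<tau>) * (Im (L \<i>) * Re \<tau> - Im (L 1) * Im \<tau>)"
    unfolding A_def L\<tau> by (simp add: Re_multiplier_def algebra_simps power2_eq_square)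
  also have "\<dots> > 0"
    using det \<open>\<tau> \<noteq> 0\<close> Re0 by (simp add: complex_eq_iff sum_power2_gt_zero_iff)
  finally have "Im A * Im (L \<tau>) > 0" .
  moreover have "(1 - u) * Im A + u * Im (L \<tau>) = 0"
    using arg_cong[OF 0, of Im] by simp
  ultimately show False
    using convex_combination_same_sign_nonzero u by blast
qed

lemma has_vector_derivative_along_circle:
  assumes "(F has_derivative D) (at (cis \<theta>) within S)" "sphere 0 1 \<subseteq> S"
  shows "((\<lambda>t. F (cis t)) has_vector_derivative D (\<i> * cis \<theta>)) (at \<theta>)"
proof -
  have "(cis has_derivative (\<lambda>t. t *\<^sub>R (\<i> * cis \<theta>))) (at \<theta>)"
    using has_derivative_cis[OF has_derivative_ident, of \<theta> UNIV] by simp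
  moreover have "range cis \<subseteq> S"
    using assms(2) by auto
  then have "(F has_derivative D) (at (cis \<theta>) within range cis)"
    using assms(1) by (auto intro: has_derivative_subset)
  ultimately have "(F \<circ> cis has_derivative D \<circ> (\<lambda>t. t *\<^sub>R (\<i> * cis \<theta>))) (at \<theta>)"
    by (rule diff_chain_within)
  moreover have "linear D"
    using assms(1) by (rule has_derivative_linear)
  ultimately show ?thesis
    unfolding has_vector_derivative_def by (simp add: o_def linear_cmul)
qed

lemma WN_eq_winding_number_tangent:
  assumes "\<And>\<theta>. ((\<lambda>t. c (cis t)) has_vector_derivative T \<theta>) (at \<theta>)"
  shows "WN c = winding_number (\<lambda>t. T (2 * pi * t)) 0"
  unfolding WN_def using vector_derivative_at[OF assms] by simp

lemma winding_number_circle_eq_if_segments_avoid: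
  assumes "continuous_on (sphere 0 1) P" "continuous_on (sphere 0 1) Q"
    and "\<And>z. z \<in> sphere 0 1 \<Longrightarrow> 0 \<notin> closed_segment (P z) (Q z)"
  shows "winding_number (\<lambda>t. P (cis (2 * pi * t))) 0 = winding_number (\<lambda>t. Q (cis (2 * pi * t))) 0"
proof (rule winding_number_homotopic_loops, rule homotopic_loops_linear)
  have "continuous_on {0..1} (\<lambda>t. cis (2 * pi * t))" "(\<lambda>t. cis (2 * pi * t)) ` {0..1} \<subseteq> sphere 0 1"
    by (auto intro!: continuous_intros)
  then show "path (\<lambda>t. P (cis (2 * pi * t)))" "path (\<lambda>t. Q (cis (2 * pi * t)))"
    unfolding path_def by (auto intro: continuous_on_compose2[OF assms(1)] continuous_on_compose2[OF assms(2)])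
  show "pathfinish (\<lambda>t. P (cis (2 * pi * t))) = pathstart (\<lambda>t. P (cis (2 * pi * t)))"
    "pathfinish (\<lambda>t. Q (cis (2 * pi * t))) = pathstart (\<lambda>t. Q (cis (2 * pi * t)))"
    by (simp_all add: pathfinish_def pathstart_def cis_multiple_2pi)
  show "closed_segment (P (cis (2 * pi * t))) (Q (cis (2 * pi * t))) \<subseteq> - {0}" for t
    using assms(3)[of "cis (2 * pi * t)"] by auto
qed

theorem theorem3p9:
  fixes U :: "complex \<Rightarrow> complex" and DU :: "complex \<Rightarrow> complex \<Rightarrow>\<^sub>L complex"
    and f :: "complex \<Rightarrow> complex"
  assumes C1: "\<forall>z\<in>cball 0 1. (U has_derivative blinfun_apply (DU z)) (at z within cball 0 1)"
    and C1_cont: "continuous_on (cball 0 1) DU"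
    and harm_u: "harmonic_on (ball 0 1) (\<lambda>z. Re (U z))"
    and harm_v: "harmonic_on (ball 0 1) (\<lambda>z. Im (U z))"
    and f_hol: "f holomorphic_on ball 0 1"
    and f_re: "\<forall>z\<in>ball 0 1. Re (f z) = Re (U z)"
    and f_ext: "continuous_on (cball 0 1) f"
    and det_pos: "\<forall>z\<in>sphere 0 1.
        Re (DU z 1) * Im (DU z \<i>) - Im (DU z 1) * Re (DU z \<i>) > 0"
  shows "(\<forall>\<theta>. (\<lambda>t. f (cis t)) differentiable (at \<theta>)
             \<and> vector_derivative (\<lambda>t. f (cis t)) (at \<theta>) \<noteq> 0)
         \<and> WN f = WN U"
proof -
  define g where "g z = Re_multiplier (DU z)" for z
  have f_tangent: "((\<lambda>t. f (cis t)) has_vector_derivative g (cis \<theta>) * (\<i> * cis \<theta>)) (at \<theta>)" for \<theta>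
  proof -
    have "(f has_field_derivative g (cis \<theta>)) (at (cis \<theta>) within cball 0 1)"
      unfolding g_def using C1 C1_cont f_hol f_re f_ext
      by (intro has_field_derivative_Re_multiplier[of _ 0]) auto
    then show ?thesis
      unfolding has_field_derivative_def using sphere_cball by (rule has_vector_derivative_along_circle)
  qed
  have U_tangent: "((\<lambda>t. U (cis t)) has_vector_derivative DU (cis \<theta>) (\<i> * cis \<theta>)) (at \<theta>)" for \<theta>
    using C1 sphere_cball by (intro has_vector_derivative_along_circle[of _ _ _ "cball 0 1"]) auto
  have avoid: "0 \<notin> closed_segment (g z * (\<i> * z)) (DU z (\<i> * z))" if "z \<in> sphere 0 1" for z
    unfolding g_def using det_pos that by (intro zero_notin_segment_Re_multiplier) auto
  have "vector_derivative (\<lambda>t. f (cis t)) (at \<theta>) \<noteq> 0" for \<theta>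
    using avoid[of "cis \<theta>"] unfolding vector_derivative_at[OF f_tangent] by auto
  moreover have "WN f = WN U"
  proof -
    have "continuous_on (sphere 0 1) (\<lambda>z. g z * (\<i> * z))"
      unfolding g_def using continuous_on_subset[OF C1_cont sphere_cball]
      by (intro continuous_intros continuous_on_Re_multiplier)
    moreover have "continuous_on (sphere 0 1) (\<lambda>z. DU z (\<i> * z))"
      by (intro continuous_intros continuous_on_subset[OF C1_cont sphere_cball])
    ultimately show ?thesis
      unfolding WN_eq_winding_number_tangent[OF f_tangent] WN_eq_winding_number_tangent[OF U_tangent]
      by (rule winding_number_circle_eq_if_segments_avoid[where P = "\<lambda>z. g z * (\<i> * z)"]) (rule avoid)
  qed
  ultimately show ?thesis
    using differentiableI_vector[OF f_tangent] by blast
qed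

end
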